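(* Let $m,n\ge 2$, $\lambda>0$, $C\in\mathbb{R}^{m\times n}$, and let $a\in\Delta_m$, $b\in\Delta_n$ have strictly positive entries. Let $P^*=S_\lambda(C,a,b)$, $p^*=\mathrm{vec}(P^* )$, and let $(\alpha^*,\beta^* )$ be dual variables with $\mathcal{K}(c,a,b,p^*,\alpha^*,\beta^* )=0$ normalized so that $\beta^*_n=0$. Define the reduced map $\tilde{\mathcal{K}}(c,a,\tilde b,p,\alpha,\tilde\beta)\in\mathbb{R}^{l-1}$ as the first $l-1$ components of $\mathcal{K}(c,a,b,p,\alpha,\beta)$ evaluated with $\beta=[\tilde\beta;0]$ (these components do not depend on $b_n$). Then the matrix $$K:=\begin{bmatrix}\lambda\,\mathrm{diag}(p^* )^{-1} & \tilde E\\ \tilde E^\top & \mathbf{0}\end{bmatrix}\in\mathbb{R}^{(l-1)\times(l-1)}$$ is invertible, and $\tilde{\mathcal{K}}=0$ implicitly defines, in a neighborhood of $(c,a,\tilde b)$, a continuously differentiable map $(c,a,\tilde b)\mapsto(p,\alpha,\tilde\beta)$ taking the value $(p^*,\alpha^*,\tilde\beta^* )$ at $(c,a,\tilde b)$, whose Jacobian at that point is $$J=\frac{\partial[p;\alpha;\tilde\beta]}{\partial[c;-a;-\tilde b]}=-K^{-1}.$$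
   Context: $\Delta_m=\{a\in\mathbb{R}^m: a_i\ge 0,\ \sum_i a_i=1\}$; $\Pi(a,b)=\{P\in\mathbb{R}^{m\times n}_{\ge0}: P\mathbb{1}_n=a,\ P^\top\mathbb{1}_m=b\}$; $h(P)=-\sum_{i,j}P_{i,j}(\log P_{i,j}-1)$; $S_\lambda(C,a,b)=\arg\min_{P\in\Pi(a,b)}\langle P,C\rangle_F-\lambda h(P)$. Column-major vectorization: $\mathrm{vec}(X)_{(j-1)m+i}=X_{i,j}$; $c=\mathrm{vec}(C)$. $l=mn+m+n$. $\mathcal{K}(c,a,b,p,\alpha,\beta)=[\,c+\lambda\log(p)+\mathbb{1}_n\otimes\alpha+\beta\otimes\mathbb{1}_m;\ (\mathbb{1}_n^\top\otimes I_m)p-a;\ (I_n\otimes\mathbb{1}_m^\top)p-b\,]$. $E=[\mathbb{1}_n\otimes I_m,\ I_n\otimes\mathbb{1}_m]\in\mathbb{R}^{mn\times(m+n)}$ and $\tilde E$ is $E$ with its last column deleted. For $v\in\mathbb{R}^n$, $\tilde v=(v_1,\dots,v_{n-1})$. $[u;v]$ denotes vertical stacking. *)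

theory Defs
  imports "HOL-Analysis.Analysis"
begin

definition prob_simplex :: "real^'m \<Rightarrow> bool" where
  "prob_simplex a \<longleftrightarrow> (\<forall>i. a $ i \<ge> 0) \<and> (\<Sum>i\<in>UNIV. a $ i) = 1"

definition transport_polytope :: "real^'m \<Rightarrow> real^'n \<Rightarrow> (real^'n^'m) set" where
  "transport_polytope a b = {P. (\<forall>i j. P $ i $ j \<ge> 0)
      \<and> (\<forall>i. (\<Sum>j\<in>UNIV. P $ i $ j) = a $ i)
      \<and> (\<forall>j. (\<Sum>i\<in>UNIV. P $ i $ j) = b $ j)}"

text \<open>Frobenius inner product and entropy h(P) = - sum P_ij (log P_ij - 1) (with 0 log 0 = 0).\<close>
definition frob :: "real^'n^'m \<Rightarrow> real^'n^'m \<Rightarrow> real" where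
  "frob P C = (\<Sum>i\<in>UNIV. \<Sum>j\<in>UNIV. P $ i $ j * C $ i $ j)"

definition entropy :: "real^'n^'m \<Rightarrow> real" where
  "entropy P = - (\<Sum>i\<in>UNIV. \<Sum>j\<in>UNIV. P $ i $ j * (ln (P $ i $ j) - 1))"

definition ot_objective :: "real \<Rightarrow> real^'n^'m \<Rightarrow> real^'n^'m \<Rightarrow> real" where
  "ot_objective lam C P = frob P C - lam * entropy P"

definition is_sinkhorn :: "real \<Rightarrow> real^'n^'m \<Rightarrow> real^'m \<Rightarrow> real^'n \<Rightarrow> real^'n^'m \<Rightarrow> bool" where
  "is_sinkhorn lam C a b P \<longleftrightarrow> P \<in> transport_polytope a b \<and>
      (\<forall>Q\<in>transport_polytope a b. ot_objective lam C P \<le> ot_objective lam C Q)"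

text \<open>The KKT map K(c,a,b,p,alpha,beta) in R^l, l = mn+m+n.  The vectorised index
  (j-1)m+i of vec(.) is represented by the pair (i,j); the three blocks by the sum type.\<close>
definition KKT :: "real \<Rightarrow> real^'n^'m \<Rightarrow> real^'m \<Rightarrow> real^'n \<Rightarrow> real^('m \<times> 'n)
                   \<Rightarrow> real^'m \<Rightarrow> real^'n \<Rightarrow> real^(('m \<times> 'n) + ('m + 'n))" where
  "KKT lam C a b p \<alpha> \<beta> = (\<chi> r. case r of
      Inl (i, j) \<Rightarrow> C $ i $ j + lam * ln (p $ (i, j)) + \<alpha> $ i + \<beta> $ j
    | Inr (Inl i) \<Rightarrow> (\<Sum>j\<in>UNIV. p $ (i, j)) - a $ i
    | Inr (Inr j) \<Rightarrow> (\<Sum>i\<in>UNIV. p $ (i, j)) - b $ j)"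

text \<open>Reduced index set of size l-1: columns are indexed by the option type over 'k,
  the last column n being None; the first n-1 columns are Some k.\<close>
type_synonym ('m, 'k) ridx = "('m \<times> 'k option) + ('m + 'k)"

definition red_emb :: "('m, 'k) ridx \<Rightarrow> ('m \<times> 'k option) + ('m + 'k option)" where
  "red_emb r = (case r of Inl ij \<Rightarrow> Inl ij | Inr (Inl i) \<Rightarrow> Inr (Inl i)
                | Inr (Inr k) \<Rightarrow> Inr (Inr (Some k)))"

definition ext0 :: "real^'k \<Rightarrow> real^('k option)" where
  "ext0 v = (\<chi> j. case j of None \<Rightarrow> 0 | Some k \<Rightarrow> v $ k)"

definition ext_with :: "real \<Rightarrow> real^'k \<Rightarrow> real^('k option)" where
  "ext_with bn v = (\<chi> j. case j of None \<Rightarrow> bn | Some k \<Rightarrow> v $ k)"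

definition pack :: "real^('m \<times> 'k option) \<Rightarrow> real^'m \<Rightarrow> real^'k \<Rightarrow> real^('m::finite, 'k::finite) ridx" where
  "pack c a v = (\<chi> r. case r of Inl ij \<Rightarrow> c $ ij | Inr (Inl i) \<Rightarrow> a $ i | Inr (Inr k) \<Rightarrow> v $ k)"

definition unpack1 :: "real^('m::finite, 'k::finite) ridx \<Rightarrow> real^('m \<times> 'k option)" where
  "unpack1 x = (\<chi> ij. x $ Inl ij)"
definition unpack2 :: "real^('m::finite, 'k::finite) ridx \<Rightarrow> real^'m" where
  "unpack2 x = (\<chi> i. x $ Inr (Inl i))"
definition unpack3 :: "real^('m::finite, 'k::finite) ridx \<Rightarrow> real^'k" where
  "unpack3 x = (\<chi> k. x $ Inr (Inr k))"

definition vec_of_mat :: "real^'n^'m \<Rightarrow> real^('m \<times> 'n)" where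
  "vec_of_mat C = (\<chi> ij. C $ fst ij $ snd ij)"
definition mat_of_vec :: "real^('m \<times> 'n) \<Rightarrow> real^'n^'m" where
  "mat_of_vec c = (\<chi> i j. c $ (i, j))"

text \<open>Reduced map K-tilde: first l-1 components of K with beta = [beta-tilde; 0];
  x = [c; a; b-tilde], y = [p; alpha; beta-tilde]; bn is the (irrelevant) value b_n.\<close>
definition KKT_red :: "real \<Rightarrow> real \<Rightarrow> real^('m::finite, 'k::finite) ridx \<Rightarrow> real^('m, 'k) ridx
                       \<Rightarrow> real^('m, 'k) ridx" where
  "KKT_red lam bn x y = (\<chi> r. KKT lam (mat_of_vec (unpack1 x)) (unpack2 x) (ext_with bn (unpack3 x))
                               (unpack1 y) (unpack2 y) (ext0 (unpack3 y)) $ red_emb r)"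

text \<open>E-tilde: E = [1_n (x) I_m, I_n (x) 1_m] with the last column (beta_n) deleted.\<close>
definition Etil :: "'m \<times> 'k option \<Rightarrow> 'm + 'k \<Rightarrow> real" where
  "Etil ij s = (case (ij, s) of ((i, j), Inl i') \<Rightarrow> (if i = i' then 1 else 0)
                | ((i, j), Inr k) \<Rightarrow> (if j = Some k then 1 else 0))"

definition Kmat :: "real \<Rightarrow> real^('m \<times> 'k option) \<Rightarrow> real^('m::finite, 'k::finite) ridx^('m, 'k) ridx" where
  "Kmat lam p = (\<chi> r s. case (r, s) of
      (Inl ij, Inl ij') \<Rightarrow> (if ij = ij' then lam / p $ ij else 0)
    | (Inl ij, Inr t) \<Rightarrow> Etil ij t
    | (Inr t, Inl ij) \<Rightarrow> Etil ij t
    | (Inr t, Inr t') \<Rightarrow> 0)"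

text \<open>Diagonal sign change corresponding to the variables [c; -a; -b-tilde].\<close>
definition sign_flip :: "real^('m::finite, 'k::finite) ridx^('m, 'k) ridx" where
  "sign_flip = (\<chi> r s. if r = s then (case r of Inl _ \<Rightarrow> 1 | Inr _ \<Rightarrow> -1) else 0)"

end

theory Submission
  imports Defs
begin

text \<open>The optimal plan \<open>P\<^sup>*\<close> has strictly positive entries: if \<open>P\<^sup>*\<^sub>i\<^sub>j = 0\<close>, moving a
  fraction \<open>t\<close> of the way towards the product plan \<open>a b\<^sup>T\<close> changes the objective, by
  convexity of \<open>x ln x\<close>, by at most \<open>t (D + \<lambda> a\<^sub>i b\<^sub>j ln t)\<close>, which is negative for small
  \<open>t\<close> because the slope of \<open>x ln x\<close> at \<open>0\<close> is \<open>-\<infinity>\<close>. Near \<open>p\<^sup>*\<close> the reduced KKT map is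
  therefore smooth and splits as \<open>S x + G y\<close>, with \<open>S\<close> the sign matrix of \<open>[c; -a; -b\<tilde>]\<close> and \<open>G' = K\<close>. If \<open>K h = 0\<close> with
  \<open>h = [u; \<alpha>; \<beta>\<tilde>]\<close>, then \<open>\<Sum> \<lambda> u\<^sub>i\<^sub>j\<^sup>2 / p\<^sub>i\<^sub>j = -\<langle>u, E\<tilde> [\<alpha>; \<beta>\<tilde>]\<rangle> = 0\<close>, so \<open>u = 0\<close>, and then
  \<open>\<alpha> = 0\<close> and \<open>\<beta>\<tilde> = 0\<close> because the column of \<open>\<beta>\<^sub>n\<close> was deleted. The inverse function
  theorem for \<open>G\<close> then yields the solution map \<open>x \<mapsto> G\<^sup>-\<^sup>1(-S x)\<close> with Jacobian
  \<open>-K\<^sup>-\<^sup>1 S\<close>.\<close>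

subsection \<open>Positivity of the entropic optimal plan\<close>

lemma xlnx_ge_tangent:
  fixes y z :: real
  assumes "y \<ge> 0" "z > 0"
  shows "z * (ln z - 1) + ln z * (y - z) \<le> y * (ln y - 1)"
proof (cases "y = 0")
  case True
  then show ?thesis using assms by (simp add: algebra_simps)
next
  case False
  then have y: "y > 0" using assms by simp
  have "ln z - ln y \<le> z / y - 1"
    using ln_le_minus_one[of "z / y"] y assms by (simp add: ln_div)
  then have "y * (ln z - ln y) \<le> z - y"
    using y by (simp add: mult_left_mono right_diff_distrib field_simps)
  then show ?thesis by (simp add: algebra_simps)
qed

lemma xlnx_convex_comb:
  fixes x r t :: real
  assumes "x \<ge> 0" "r > 0" "0 < t" "t < 1"
  shows "((1 - t) * x + t * r) * (ln ((1 - t) * x + t * r) - 1)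
           \<le> (1 - t) * (x * (ln x - 1)) + t * (r * (ln r - 1))"
proof -
  define w where "w = (1 - t) * x + t * r"
  have "w > 0"
    unfolding w_def using assms by (smt (verit) mult_nonneg_nonneg mult_pos_pos)
  then have "(1 - t) * (w * (ln w - 1) + ln w * (x - w)) + t * (w * (ln w - 1) + ln w * (r - w))
           \<le> (1 - t) * (x * (ln x - 1)) + t * (r * (ln r - 1))"
    using assms xlnx_ge_tangent by (intro add_mono mult_left_mono) auto
  moreover have "(1 - t) * (w * (ln w - 1) + ln w * (x - w)) + t * (w * (ln w - 1) + ln w * (r - w))
                 = w * (ln w - 1)"
    by (simp add: w_def algebra_simps)
  ultimately show ?thesis by (simp add: w_def)
qed

lemma convex_transport_polytope: "convex (transport_polytope a b)"
  unfolding convex_def transport_polytope_def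
  by (auto simp: sum.distrib sum_distrib_left[symmetric] distrib_right[symmetric])

lemma outer_product_in_transport_polytope:
  assumes "prob_simplex a" "prob_simplex b"
  shows "(\<chi> i j. a $ i * b $ j) \<in> transport_polytope a b"
  using assms unfolding prob_simplex_def transport_polytope_def
  by (auto simp: sum_distrib_left[symmetric] sum_distrib_right[symmetric])

lemma ot_objective_eq_sum:
  "ot_objective lam C Q
     = (\<Sum>i\<in>UNIV. \<Sum>j\<in>UNIV. Q $ i $ j * C $ i $ j + lam * (Q $ i $ j * (ln (Q $ i $ j) - 1)))"
  unfolding ot_objective_def frob_def entropy_def
  by (simp add: sum.distrib sum_distrib_left)

lemma ot_objective_towards_positive_le:
  fixes P R :: "real^'n::finite^'m::finite"
  assumes lam: "lam \<ge> 0" and P: "\<forall>i j. P $ i $ j \<ge> 0" and R: "\<forall>i j. R $ i $ j > 0"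
    and P0: "P $ i $ j = 0" and t: "0 < t" "t < 1"
  shows "ot_objective lam C ((1 - t) *\<^sub>R P + t *\<^sub>R R)
           \<le> (1 - t) * ot_objective lam C P + t * ot_objective lam C R + lam * t * R $ i $ j * ln t"
proof -
  define f where "f q c = q * c + lam * (q * (ln q - 1))" for q c :: real
  define Q where "Q = (1 - t) *\<^sub>R P + t *\<^sub>R R"
  have entry: "f (Q $ i' $ j') (C $ i' $ j')
      \<le> (1 - t) * f (P $ i' $ j') (C $ i' $ j') + t * f (R $ i' $ j') (C $ i' $ j')
        + (if i' = i \<and> j' = j then lam * t * R $ i $ j * ln t else 0)" for i' j'
  proof (cases "i' = i \<and> j' = j")
    case True
    have "R $ i $ j > 0" using R by blast
    then have "ln (t * R $ i $ j) = ln t + ln (R $ i $ j)"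
      using t by (simp add: ln_mult)
    then show ?thesis using True P0 by (simp add: Q_def f_def algebra_simps)
  next
    case False
    have "lam * (Q $ i' $ j' * (ln (Q $ i' $ j') - 1))
          \<le> lam * ((1 - t) * (P $ i' $ j' * (ln (P $ i' $ j') - 1)) + t * (R $ i' $ j' * (ln (R $ i' $ j') - 1)))"
      using xlnx_convex_comb[of "P $ i' $ j'" "R $ i' $ j'" t] P R t lam
      by (simp add: Q_def mult_left_mono)
    then show ?thesis unfolding if_not_P[OF False] by (simp add: Q_def f_def algebra_simps)
  qed
  have delta: "(\<Sum>i'\<in>UNIV. \<Sum>j'\<in>UNIV. if i' = i \<and> j' = j then c else 0) = (c::real)" for c
  proof -
    have "(\<Sum>j'\<in>UNIV. if i' = i \<and> j' = j then c else 0) = (if i' = i then c else 0)" for i'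
      by (cases "i' = i") simp_all
    then show ?thesis by simp
  qed
  have "ot_objective lam C Q \<le> (\<Sum>i'\<in>UNIV. \<Sum>j'\<in>UNIV.
      (1 - t) * f (P $ i' $ j') (C $ i' $ j') + t * f (R $ i' $ j') (C $ i' $ j')
      + (if i' = i \<and> j' = j then lam * t * R $ i $ j * ln t else 0))"
    unfolding ot_objective_eq_sum f_def[symmetric] by (intro sum_mono entry)
  also have "\<dots> = (1 - t) * ot_objective lam C P + t * ot_objective lam C R + lam * t * R $ i $ j * ln t"
    unfolding ot_objective_eq_sum f_def[symmetric]
    by (simp add: sum.distrib sum_distrib_left delta)
  finally show ?thesis unfolding Q_def .
qed

lemma sinkhorn_pos:
  assumes lam: "lam > 0" and a: "prob_simplex a" "\<forall>i. a $ i > 0"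
    and b: "prob_simplex b" "\<forall>j. b $ j > 0" and P: "is_sinkhorn lam C a b P"
  shows "P $ i $ j > 0"
proof (rule ccontr)
  assume "\<not> P $ i $ j > 0"
  have Ppol: "P \<in> transport_polytope a b"
    and Pmin: "\<And>Q. Q \<in> transport_polytope a b \<Longrightarrow> ot_objective lam C P \<le> ot_objective lam C Q"
    using P unfolding is_sinkhorn_def by auto
  then have Pnn: "\<forall>i j. P $ i $ j \<ge> 0" unfolding transport_polytope_def by blast
  then have "P $ i $ j \<ge> 0" by blast
  with \<open>\<not> P $ i $ j > 0\<close> have P0: "P $ i $ j = 0" by linarith
  define R where "R = (\<chi> i j. a $ i * b $ j)"
  have Rpol: "R \<in> transport_polytope a b"
    unfolding R_def using a(1) b(1) by (rule outer_product_in_transport_polytope)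
  have Rpos: "\<forall>i j. R $ i $ j > 0" unfolding R_def using a(2) b(2) by simp
  define D where "D = ot_objective lam C R - ot_objective lam C P"
  define r where "r = R $ i $ j"
  have r: "r > 0" unfolding r_def using Rpos by simp
  have slope: "0 \<le> D + lam * r * ln t" if t: "0 < t" "t < 1" for t
  proof -
    have "(1 - t) *\<^sub>R P + t *\<^sub>R R \<in> transport_polytope a b"
      using convexD[OF convex_transport_polytope Ppol Rpol, of "1 - t" t] t by simp
    then have "ot_objective lam C P \<le> ot_objective lam C ((1 - t) *\<^sub>R P + t *\<^sub>R R)"
      by (rule Pmin)
    also have "\<dots> \<le> (1 - t) * ot_objective lam C P + t * ot_objective lam C R + lam * t * r * ln t"
      unfolding r_def using lam Pnn Rpos P0 t by (intro ot_objective_towards_positive_le) auto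
    finally have "0 \<le> t * (D + lam * r * ln t)" by (simp add: D_def algebra_simps)
    then show ?thesis using t by (simp add: zero_le_mult_iff)
  qed
  define t where "t = exp (- (\<bar>D\<bar> / (lam * r) + 1))"
  have "\<bar>D\<bar> / (lam * r) \<ge> 0" using lam r by simp
  then have "0 < t" "t < 1" unfolding t_def by auto
  moreover have "lam * r * ln t = - \<bar>D\<bar> - lam * r"
    unfolding t_def using lam r by (simp add: field_simps)
  ultimately show False using slope[of t] lam r by (smt (verit) mult_pos_pos)
qed

subsection \<open>Invertibility of the reduced KKT matrix\<close>

lemma sum_UNIV_Plus:
  "sum f (UNIV :: ('a::finite + 'b::finite) set) = (\<Sum>x\<in>UNIV. f (Inl x)) + (\<Sum>x\<in>UNIV. f (Inr x))"
  by (subst UNIV_Plus_UNIV[symmetric], subst sum.Plus) (auto simp: o_def)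

lemma sum_UNIV_prod:
  "sum f (UNIV :: ('a::finite \<times> 'b::finite) set) = (\<Sum>x\<in>UNIV. \<Sum>y\<in>UNIV. f (x, y))"
  by (subst UNIV_Times_UNIV[symmetric], subst sum.cartesian_product) simp

lemma sum_UNIV_option:
  "sum f (UNIV :: ('a::finite option) set) = f None + (\<Sum>x\<in>UNIV. f (Some x))"
  by (subst UNIV_option_conv, subst sum.insert) (auto simp: sum.reindex)

lemma Kmat_mult_vector:
  fixes p :: "real^('m::finite \<times> 'k::finite option)" and h :: "real^('m, 'k) ridx"
  shows "(Kmat lam p *v h) $ r = (case r of
      Inl (i, j) \<Rightarrow> lam / p $ (i, j) * h $ Inl (i, j) + h $ Inr (Inl i)
                    + (case j of None \<Rightarrow> 0 | Some k \<Rightarrow> h $ Inr (Inr k))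
    | Inr (Inl i) \<Rightarrow> (\<Sum>j\<in>UNIV. h $ Inl (i, j))
    | Inr (Inr k) \<Rightarrow> (\<Sum>i\<in>UNIV. h $ Inl (i, Some k)))"
proof -
  have ifm: "(if P then x else 0) * y = (if P then x * y else 0)" for P and x y :: real
    by simp
  have sum_if_row: "(\<Sum>x\<in>UNIV. \<Sum>y\<in>UNIV. if x = i then f y else 0) = (\<Sum>y\<in>UNIV. f y)"
    for i :: 'm and f :: "'k option \<Rightarrow> real"
  proof -
    have "(\<Sum>y\<in>UNIV. if x = i then f y else 0) = (if x = i then (\<Sum>y\<in>UNIV. f y) else 0)" for x
      by simp
    then show ?thesis by simp
  qed
  have e: "(Kmat lam p *v h) $ r = (\<Sum>s\<in>UNIV. Kmat lam p $ r $ s * h $ s)"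
    by (simp add: matrix_vector_mult_def)
  show ?thesis
  proof (cases r)
    case (Inl ij)
    then obtain i j where ij: "r = Inl (i, j)" by (cases ij) auto
    have "(\<Sum>s\<in>UNIV. Kmat lam p $ r $ s * h $ s) = lam / p $ (i, j) * h $ Inl (i, j)
        + h $ Inr (Inl i) + (case j of None \<Rightarrow> 0 | Some k \<Rightarrow> h $ Inr (Inr k))"
      unfolding ij Kmat_def
      by (cases j) (auto simp: sum_UNIV_Plus Etil_def ifm cong: if_cong)
    then show ?thesis using e ij by simp
  next
    case (Inr t)
    show ?thesis
    proof (cases t)
      case (Inl i)
      have "(\<Sum>s\<in>UNIV. Kmat lam p $ r $ s * h $ s) = (\<Sum>j\<in>UNIV. h $ Inl (i, j))"
        unfolding Inr Inl Kmat_def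
        by (simp add: sum_UNIV_Plus sum_UNIV_prod Etil_def ifm sum_if_row cong: if_cong)
      then show ?thesis using e Inr Inl by simp
    next
      case (Inr k)
      have "(\<Sum>s\<in>UNIV. Kmat lam p $ r $ s * h $ s) = (\<Sum>i\<in>UNIV. h $ Inl (i, Some k))"
        unfolding \<open>r = Inr t\<close> Inr Kmat_def
        by (simp add: sum_UNIV_Plus sum_UNIV_prod sum_UNIV_option Etil_def ifm cong: if_cong)
      then show ?thesis using e \<open>r = Inr t\<close> Inr by simp
    qed
  qed
qed

lemma Kmat_kernel_primal_zero:
  fixes p :: "real^('m::finite \<times> 'k::finite option)" and h :: "real^('m, 'k) ridx"
  assumes lam: "lam > 0" and pos: "\<And>ij. p $ ij > 0" and h0: "Kmat lam p *v h = 0"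
  shows "h $ Inl ij = 0"
proof -
  define u where "u i j = h $ Inl (i, j)" for i j
  define \<alpha> where "\<alpha> i = h $ Inr (Inl i)" for i
  define \<beta> where "\<beta> j = (case j of None \<Rightarrow> 0 | Some k \<Rightarrow> h $ Inr (Inr k))" for j
  have stat: "lam / p $ (i, j) * u i j + \<alpha> i + \<beta> j = 0" for i j
    using arg_cong[OF h0, of "\<lambda>v. v $ Inl (i, j)"]
    unfolding Kmat_mult_vector u_def \<alpha>_def \<beta>_def by simp
  have rows: "(\<Sum>j\<in>UNIV. u i j) = 0" for i
    using arg_cong[OF h0, of "\<lambda>v. v $ Inr (Inl i)"] unfolding Kmat_mult_vector u_def by simp
  have cols: "\<beta> j * (\<Sum>i\<in>UNIV. u i j) = 0" for j
    using arg_cong[OF h0, of "\<lambda>v. v $ Inr (Inr (the j))"]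
    unfolding Kmat_mult_vector u_def \<beta>_def by (cases j) simp_all
  define q where "q i j = lam / p $ (i, j) * (u i j)\<^sup>2" for i j
  have q_nonneg: "q i j \<ge> 0" for i j
    unfolding q_def using lam pos[of "(i, j)"] by simp
  have q_eq: "q i j = - (\<alpha> i * u i j) - \<beta> j * u i j" for i j
  proof -
    have "q i j = u i j * (lam / p $ (i, j) * u i j + \<alpha> i + \<beta> j) - \<alpha> i * u i j - \<beta> j * u i j"
      by (simp add: q_def power2_eq_square algebra_simps)
    then show ?thesis unfolding stat by simp
  qed
  have "(\<Sum>i\<in>UNIV. \<Sum>j\<in>UNIV. q i j) = (\<Sum>i\<in>UNIV. \<Sum>j\<in>UNIV. - (\<alpha> i * u i j) - \<beta> j * u i j)"
    by (simp only: q_eq)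
  also have "\<dots> = - (\<Sum>i\<in>UNIV. \<alpha> i * (\<Sum>j\<in>UNIV. u i j)) - (\<Sum>j\<in>UNIV. \<beta> j * (\<Sum>i\<in>UNIV. u i j))"
    by (simp add: sum_subtractf sum_negf sum_distrib_left sum.swap[of "\<lambda>i j. \<beta> j * u i j"])
  also have "\<dots> = 0" by (simp add: rows cols)
  finally have "(\<Sum>i\<in>UNIV. \<Sum>j\<in>UNIV. q i j) = 0" .
  then have "q i j = 0" for i j
    using q_nonneg by (simp add: sum_nonneg sum_nonneg_eq_0_iff)
  then have "u i j = 0" for i j
    unfolding q_def using lam pos by (metis less_irrefl mult_eq_0_iff divide_eq_0_iff power_eq_0_iff)
  then show ?thesis unfolding u_def by (cases ij) simp
qed

lemma Kmat_invertible:
  fixes p :: "real^('m::finite \<times> 'k::finite option)"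
  assumes lam: "lam > 0" and pos: "\<And>ij. p $ ij > 0"
  shows "invertible (Kmat lam p)"
  unfolding invertible_left_inverse matrix_left_invertible_ker
proof (intro allI impI)
  fix h :: "real^('m, 'k) ridx"
  assume h0: "Kmat lam p *v h = 0"
  then have u0: "h $ Inl ij = 0" for ij by (rule Kmat_kernel_primal_zero[OF lam pos])
  have stat: "(Kmat lam p *v h) $ Inl (i, j) = 0" for i j
    using h0 by simp
  have \<alpha>0: "h $ Inr (Inl i) = 0" for i
    using stat[of i None] u0 by (simp add: Kmat_mult_vector)
  have \<beta>0: "h $ Inr (Inr k) = 0" for k
    using stat[of undefined "Some k"] u0 \<alpha>0 by (simp add: Kmat_mult_vector)
  show "h = 0"
  proof (rule vec_eq_iff[THEN iffD2], rule allI)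
    fix r :: "('m, 'k) ridx"
    show "h $ r = 0 $ r"
    proof (cases r)
      case (Inr t)
      then show ?thesis using \<alpha>0 \<beta>0 by (cases t) simp_all
    qed (simp add: u0)
  qed
qed

definition primal_pos :: "(real^('m::finite, 'k::finite) ridx) set" where
  "primal_pos = {y. \<forall>ij. y $ Inl ij > 0}"

lemma open_primal_pos: "open primal_pos"
  unfolding primal_pos_def Collect_all_eq
  by (intro open_INT) (auto intro!: open_Collect_less continuous_intros)

lemma Kmat_invertible_on_primal_pos:
  assumes "lam > 0" "y \<in> primal_pos"
  shows "invertible (Kmat lam (unpack1 y))"
proof (rule Kmat_invertible[OF assms(1)])
  fix ij
  show "unpack1 y $ ij > 0" using assms(2) unfolding primal_pos_def unpack1_def by (cases ij) simp
qed

lemma continuous_on_Kmat: "continuous_on primal_pos (\<lambda>y. Kmat lam (unpack1 y))"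
proof -
  have inv_entry: "continuous_on primal_pos (\<lambda>y. lam / y $ Inl ij)" for ij
    by (intro continuous_intros) (metis (mono_tags) primal_pos_def mem_Collect_eq less_irrefl)
  have "continuous_on primal_pos (\<lambda>y. Kmat lam (unpack1 y) $ r $ s)" for r s
  proof (cases r; cases s)
    fix ij ij' assume "r = Inl ij" "s = Inl ij'"
    then show ?thesis using inv_entry by (cases "ij = ij'") (simp_all add: Kmat_def unpack1_def)
  qed (simp_all add: Kmat_def)
  then have "continuous_on primal_pos (\<lambda>y. \<chi> r s. Kmat lam (unpack1 y) $ r $ s)"
    by (intro continuous_on_vec_lambda)
  then show ?thesis by simp
qed

lemma matrix_mul_matrix_inv:
  fixes A :: "real^'n^'n"
  assumes "invertible A"
  shows "A ** matrix_inv A = mat 1" "matrix_inv A ** A = mat 1"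
proof -
  have "A ** matrix_inv A = mat 1 \<and> matrix_inv A ** A = mat 1"
    using assms unfolding matrix_inv_def invertible_def by (rule someI_ex)
  then show "A ** matrix_inv A = mat 1" "matrix_inv A ** A = mat 1" by auto
qed

lemma matrix_inv_eq_cramer:
  fixes A :: "real^'n^'n"
  assumes d: "det A \<noteq> 0"
  shows "matrix_inv A $ i $ j = det (\<chi> r s. if s = i then (if r = j then 1 else 0) else A $ r $ s) / det A"
proof -
  have inv: "invertible A" using d invertible_det_nz by blast
  define x where "x = matrix_inv A *v axis j 1"
  have "A *v x = axis j 1" unfolding x_def
    by (simp add: matrix_vector_mul_assoc matrix_mul_matrix_inv[OF inv])
  then have "x $ i = det (\<chi> r s. if s = i then (axis j 1 :: real^'n) $ r else A $ r $ s) / det A"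
    using cramer[OF d] by simp
  moreover have "x $ i = matrix_inv A $ i $ j"
    unfolding x_def by (simp add: matrix_vector_mult_basis column_def)
  moreover have "(\<chi> r s. if s = i then (axis j 1 :: real^'n) $ r else A $ r $ s)
                 = (\<chi> r s. if s = i then (if r = j then 1 else 0) else A $ r $ s)"
    by (simp add: axis_def vec_eq_iff)
  ultimately show ?thesis by simp
qed

lemma continuous_on_det:
  fixes f :: "'a::topological_space \<Rightarrow> real^'n^'n"
  assumes "continuous_on S f"
  shows "continuous_on S (\<lambda>x. det (f x))"
  unfolding det_def by (intro continuous_intros assms)

lemma continuous_on_matrix_inv:
  fixes f :: "'a::topological_space \<Rightarrow> real^'n^'n"
  assumes f: "continuous_on S f" and inv: "\<And>x. x \<in> S \<Longrightarrow> invertible (f x)"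
  shows "continuous_on S (\<lambda>x. matrix_inv (f x))"
proof -
  have d: "\<And>x. x \<in> S \<Longrightarrow> det (f x) \<noteq> 0" using inv invertible_det_nz by blast
  have entry: "continuous_on S (\<lambda>x. if s = i then c else f x $ r $ s)" for i r s c
    by (cases "s = i") (simp_all add: f continuous_intros)
  have "continuous_on S (\<lambda>x. \<chi> i j. det (\<chi> r s. if s = i then (if r = j then 1 else 0) else f x $ r $ s) / det (f x))"
    using d by (intro continuous_intros continuous_on_det entry f) auto
  moreover have "matrix_inv (f x) = (\<chi> i j. det (\<chi> r s. if s = i then (if r = j then 1 else 0) else f x $ r $ s) / det (f x))"
    if "x \<in> S" for x
    using d[OF that] by (simp add: vec_eq_iff matrix_inv_eq_cramer)
  ultimately show ?thesis using continuous_on_cong by (smt (verit))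
qed

lemma continuous_on_matrix_mult_const:
  fixes f :: "'a::topological_space \<Rightarrow> real^'n^'m"
  assumes "continuous_on S f"
  shows "continuous_on S (\<lambda>x. f x ** (B :: real^'p^'n))"
  unfolding matrix_matrix_mult_def by (intro continuous_intros assms)

lemma continuous_on_matrix_vector_mult_const:
  fixes f :: "'a::topological_space \<Rightarrow> real^'n^'m"
  assumes "continuous_on S f"
  shows "continuous_on S (\<lambda>x. f x *v (v :: real^'n))"
  unfolding matrix_vector_mult_def by (intro continuous_intros assms)

lemma matrix_mul_uminus_left: "(- (A :: real^'n^'m)) ** (B :: real^'p^'n) = - (A ** B)"
  by (simp add: vec_eq_iff matrix_matrix_mult_def sum_negf)

lemma matrix_vector_mult_uminus_left: "(- (A :: real^'n^'m)) *v (v :: real^'n) = - (A *v v)"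
  by (simp add: vec_eq_iff matrix_vector_mult_def sum_negf)

subsection \<open>Inverse and implicit functions with matrix derivatives\<close>

lemma inverse_function_theorem_matrix:
  fixes G :: "real^'n::finite \<Rightarrow> real^'n" and M :: "real^'n \<Rightarrow> real^'n^'n"
  assumes W: "open W" "y0 \<in> W"
    and derG: "\<And>y. y \<in> W \<Longrightarrow> (G has_derivative (\<lambda>h. M y *v h)) (at y)"
    and contM: "continuous_on W M"
    and invM: "\<And>y. y \<in> W \<Longrightarrow> invertible (M y)"
  obtains V Z H where "open V" "V \<subseteq> W" "y0 \<in> V" "open Z" "G y0 \<in> Z" "homeomorphism V Z G H"
    "\<And>z. z \<in> Z \<Longrightarrow> (H has_derivative (\<lambda>h. matrix_inv (M (H z)) *v h)) (at z)"
proof -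
  define G' where "G' y = Blinfun (\<lambda>h. M y *v h)" for y
  have G': "blinfun_apply (G' y) = (\<lambda>h. M y *v h)" for y
    unfolding G'_def by (rule bounded_linear_Blinfun_apply) simp
  define I where "I = Blinfun (\<lambda>h. matrix_inv (M y0) *v h)"
  have I: "blinfun_apply I = (\<lambda>h. matrix_inv (M y0) *v h)"
    unfolding I_def by (rule bounded_linear_Blinfun_apply) simp
  have derG': "\<And>y. y \<in> W \<Longrightarrow> (G has_derivative blinfun_apply (G' y)) (at y)"
    unfolding G' by (rule derG)
  have contG': "continuous_on W G'"
    by (rule continuous_on_blinfun_componentwise)
      (simp add: G' continuous_on_matrix_vector_mult_const contM)
  have invI: "I o\<^sub>L G' y0 = id_blinfun"
    by (rule blinfun_eqI)
      (simp add: I G' matrix_vector_mul_assoc matrix_mul_matrix_inv[OF invM[OF W(2)]])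
  obtain V Z H H' where VZ: "open V" "V \<subseteq> W" "y0 \<in> V" "open Z" "G y0 \<in> Z"
      "homeomorphism V Z G H"
    and derH: "\<And>z. z \<in> Z \<Longrightarrow> (H has_derivative H' z) (at z)"
    and H': "\<And>z. z \<in> Z \<Longrightarrow> H' z = inv (blinfun_apply (G' (H z)))"
    using inverse_function_theorem[OF W(1) derG' contG' W(2) invI] by metis
  have "H' z = (\<lambda>h. matrix_inv (M (H z)) *v h)" if "z \<in> Z" for z
  proof -
    have "H z \<in> W" using VZ(2,6) that unfolding homeomorphism_def by auto
    then have inv: "invertible (M (H z))" by (rule invM)
    have "inv (\<lambda>h. M (H z) *v h) = (\<lambda>h. matrix_inv (M (H z)) *v h)"
      by (rule inv_unique_comp)
        (simp_all add: fun_eq_iff matrix_vector_mul_assoc matrix_mul_matrix_inv[OF inv])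
    then show ?thesis using H'[OF that] by (simp add: G')
  qed
  with derH have "\<And>z. z \<in> Z \<Longrightarrow> (H has_derivative (\<lambda>h. matrix_inv (M (H z)) *v h)) (at z)"
    by simp
  then show thesis by (rule that[OF VZ])
qed

lemma implicit_function_linear_plus:
  fixes A :: "real^'p::finite^'n::finite" and G :: "real^'n \<Rightarrow> real^'n"
    and M :: "real^'n \<Rightarrow> real^'n^'n"
  assumes W: "open W" "y0 \<in> W"
    and derG: "\<And>y. y \<in> W \<Longrightarrow> (G has_derivative (\<lambda>h. M y *v h)) (at y)"
    and contM: "continuous_on W M"
    and invM: "\<And>y. y \<in> W \<Longrightarrow> invertible (M y)"
    and zero: "A *v x0 + G y0 = 0"
  shows "\<exists>U V g g'. open U \<and> x0 \<in> U \<and> open V \<and> y0 \<in> V \<and> g x0 = y0 \<and> (\<forall>x\<in>U. g x \<in> V) \<and>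
    (\<forall>x\<in>U. \<forall>y\<in>V. A *v x + G y = 0 \<longleftrightarrow> y = g x) \<and>
    (\<forall>x\<in>U. (g has_derivative (\<lambda>h. g' x *v h)) (at x)) \<and> continuous_on U g' \<and>
    g' x0 = - (matrix_inv (M y0) ** A)"
proof -
  obtain V Z H where V: "open V" "V \<subseteq> W" "y0 \<in> V" and Z: "open Z" "G y0 \<in> Z"
    and hom: "homeomorphism V Z G H"
    and derH: "\<And>z. z \<in> Z \<Longrightarrow> (H has_derivative (\<lambda>h. matrix_inv (M (H z)) *v h)) (at z)"
    using inverse_function_theorem_matrix[OF W derG contM invM] by blast
  have HG: "\<And>y. y \<in> V \<Longrightarrow> H (G y) = y" and GH: "\<And>z. z \<in> Z \<Longrightarrow> G (H z) = z"
    and HZ: "H ` Z = V" and contH: "continuous_on Z H"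
    using hom unfolding homeomorphism_def by auto
  define L where "L x = - (A *v x)" for x
  have linL: "bounded_linear L"
    unfolding L_def by (intro bounded_linear_minus matrix_vector_mul_bounded_linear)
  define U where "U = L -` Z"
  define g where "g x = H (L x)" for x
  define g' where "g' x = - (matrix_inv (M (g x)) ** A)" for x
  have openU: "open U"
    unfolding U_def using open_vimage[OF Z(1) linear_continuous_on[OF linL]] .
  have L_eq: "A *v x + G y = 0 \<longleftrightarrow> G y = L x" for x y
    unfolding L_def by (metis add.commute add_eq_0_iff)
  have x0U: "x0 \<in> U" and gx0: "g x0 = y0"
    using zero Z(2) HG[OF V(3)] unfolding L_eq U_def g_def by auto
  have gV: "\<forall>x\<in>U. g x \<in> V" unfolding g_def U_def using HZ by auto
  have solve: "\<forall>x\<in>U. \<forall>y\<in>V. A *v x + G y = 0 \<longleftrightarrow> y = g x"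
    unfolding L_eq U_def g_def using GH by (auto, metis HG)
  have derg: "\<forall>x\<in>U. (g has_derivative (\<lambda>h. g' x *v h)) (at x)"
  proof
    fix x assume "x \<in> U"
    then have "((\<lambda>x. H (L x)) has_derivative (\<lambda>h. matrix_inv (M (g x)) *v L h)) (at x)"
      using has_derivative_compose[OF bounded_linear_imp_has_derivative[OF linL] derH]
      by (simp add: U_def g_def)
    moreover have "(\<lambda>h. matrix_inv (M (g x)) *v L h) = (\<lambda>h. g' x *v h)"
      by (simp add: fun_eq_iff L_def g'_def vec.neg matrix_vector_mult_uminus_left
          matrix_vector_mul_assoc)
    ultimately show "(g has_derivative (\<lambda>h. g' x *v h)) (at x)"
      unfolding g_def[abs_def] by simp
  qed
  have contg: "continuous_on U g"
    unfolding g_def U_def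
    by (rule continuous_on_compose2[OF contH linear_continuous_on[OF linL]]) auto
  have "continuous_on U (\<lambda>x. M (g x))"
    using continuous_on_compose2[OF contM contg] gV V(2) by blast
  then have "continuous_on U g'"
    unfolding g'_def using gV V(2) invM
    by (intro continuous_on_minus continuous_on_matrix_mult_const continuous_on_matrix_inv) auto
  moreover have "g' x0 = - (matrix_inv (M y0) ** A)" by (simp add: g'_def gx0)
  ultimately show ?thesis using openU x0U V(1,3) gx0 gV solve derg by blast
qed

subsection \<open>The reduced KKT map\<close>

definition KKT_red_state :: "real \<Rightarrow> real^('m::finite, 'k::finite) ridx \<Rightarrow> real^('m, 'k) ridx" where
  "KKT_red_state lam y = (\<chi> r. case r of
      Inl (i, j) \<Rightarrow> lam * ln (y $ Inl (i, j)) + y $ Inr (Inl i)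
                    + (case j of None \<Rightarrow> 0 | Some k \<Rightarrow> y $ Inr (Inr k))
    | Inr (Inl i) \<Rightarrow> (\<Sum>j\<in>UNIV. y $ Inl (i, j))
    | Inr (Inr k) \<Rightarrow> (\<Sum>i\<in>UNIV. y $ Inl (i, Some k)))"

lemma sign_flip_mult_vector:
  "((sign_flip :: real^('m::finite, 'k::finite) ridx^('m, 'k) ridx) *v x) $ r
     = (case r of Inl _ \<Rightarrow> x $ r | Inr _ \<Rightarrow> - x $ r)"
  unfolding matrix_vector_mult_def sign_flip_def
  by (cases r) (auto simp: if_distrib[where f="\<lambda>z. z * _"] cong: if_cong)

lemma sign_flip_mult_self:
  "(sign_flip :: real^('m::finite, 'k::finite) ridx^('m, 'k) ridx) ** sign_flip = mat 1"
proof -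
  have ifm: "(if P then x else 0) * y = (if P then x * y else 0)" for P and x y :: real
    by simp
  show ?thesis
    unfolding matrix_matrix_mult_def sign_flip_def mat_def
    by (simp add: vec_eq_iff ifm cong: if_cong split: sum.split)
qed

lemma KKT_red_eq:
  "KKT_red lam bn x y = sign_flip *v x + KKT_red_state lam y"
  by (auto simp: vec_eq_iff KKT_red_def KKT_def red_emb_def unpack1_def unpack2_def unpack3_def
      mat_of_vec_def ext0_def ext_with_def KKT_red_state_def sign_flip_mult_vector
      split: sum.split option.split)

lemma KKT_red_pack:
  assumes "\<beta> $ None = 0"
  shows "KKT_red lam (b $ None) (pack (vec_of_mat C) a (\<chi> k. b $ Some k)) (pack p \<alpha> (\<chi> k. \<beta> $ Some k))
           = (\<chi> r. KKT lam C a b p \<alpha> \<beta> $ red_emb r)"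
proof -
  have "mat_of_vec (unpack1 (pack (vec_of_mat C) a (\<chi> k. b $ Some k))) = C"
    by (simp add: pack_def unpack1_def mat_of_vec_def vec_of_mat_def vec_eq_iff)
  moreover have "ext_with (b $ None) (\<chi> k. b $ Some k) = b" "ext0 (\<chi> k. \<beta> $ Some k) = \<beta>"
    using assms by (simp_all add: ext_with_def ext0_def vec_eq_iff split: option.split)
  ultimately show ?thesis
    unfolding KKT_red_def by (simp add: pack_def unpack1_def unpack2_def unpack3_def)
qed

lemma has_derivative_vec_componentwise:
  fixes f :: "'a::real_normed_vector \<Rightarrow> real^'n"
  assumes "\<And>i. ((\<lambda>x. f x $ i) has_derivative (\<lambda>h. f' h $ i)) (at x)"
  shows "(f has_derivative f') (at x)"
  using assms unfolding has_derivative_componentwise_within[of f f' x UNIV]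
  by (auto simp: Basis_vec_def inner_axis)

lemma has_derivative_KKT_red_state:
  fixes y :: "real^('m::finite, 'k::finite) ridx"
  assumes "y \<in> primal_pos"
  shows "(KKT_red_state lam has_derivative (\<lambda>h. Kmat lam (unpack1 y) *v h)) (at y)"
proof (rule has_derivative_vec_componentwise)
  have pos: "y $ Inl ij > 0" for ij using assms unfolding primal_pos_def by blast
  have nth: "((\<lambda>y. y $ i) has_derivative (\<lambda>h. h $ i)) (at y)" for i
    by (rule bounded_linear_imp_has_derivative) (rule bounded_linear_vec_nth)
  have lnd: "((\<lambda>y. lam * ln (y $ Inl ij)) has_derivative (\<lambda>h. lam * h $ Inl ij / y $ Inl ij)) (at y)" for ij
    by (rule has_derivative_eq_rhs[OF has_derivative_mult_right[OF has_derivative_ln[OF pos nth]]])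
      (simp add: fun_eq_iff field_simps)
  fix r :: "('m, 'k) ridx"
  show "((\<lambda>y. KKT_red_state lam y $ r) has_derivative (\<lambda>h. (Kmat lam (unpack1 y) *v h) $ r)) (at y)"
  proof (cases r)
    case (Inl ij)
    obtain i j where "ij = (i, j)" by fastforce
    then show ?thesis
      using Inl unfolding KKT_red_state_def Kmat_mult_vector
      by (cases j) (auto simp: unpack1_def intro!: has_derivative_add lnd nth)
  next
    case (Inr t)
    then show ?thesis
      unfolding KKT_red_state_def Kmat_mult_vector by (cases t) (auto intro!: has_derivative_sum nth)
  qed
qed

theorem lemma2:
  fixes lam :: real
    and C :: "real^('k::finite option)^('m::finite)"
    and a :: "real^'m" and b :: "real^('k option)"
    and Pstar :: "real^('k option)^'m"
    and \<alpha>star :: "real^'m" and \<beta>star :: "real^('k option)"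
  assumes m2: "CARD('m) \<ge> 2"
    and lam: "lam > 0"
    and a: "prob_simplex a" "\<forall>i. a $ i > 0"
    and b: "prob_simplex b" "\<forall>j. b $ j > 0"
    and P: "is_sinkhorn lam C a b Pstar"
    and KKT0: "KKT lam C a b (vec_of_mat Pstar) \<alpha>star \<beta>star = 0"
    and norm: "\<beta>star $ None = 0"
  defines "x0 \<equiv> pack (vec_of_mat C) a (\<chi> k. b $ Some k)"
    and "y0 \<equiv> pack (vec_of_mat Pstar) \<alpha>star (\<chi> k. \<beta>star $ Some k)"
    and "K \<equiv> Kmat lam (vec_of_mat Pstar)"
  shows "invertible K \<and>
    (\<exists>U V g g'. open U \<and> x0 \<in> U \<and> open V \<and> y0 \<in> V \<and> g x0 = y0 \<and>
       (\<forall>x\<in>U. g x \<in> V) \<and>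
       (\<forall>x\<in>U. \<forall>y\<in>V. KKT_red lam (b $ None) x y = 0 \<longleftrightarrow> y = g x) \<and>
       (\<forall>x\<in>U. (g has_derivative (\<lambda>h. g' x *v h)) (at x)) \<and>
       continuous_on U g' \<and>
       g' x0 ** sign_flip = - matrix_inv K)"
proof -
  have p_pos: "vec_of_mat Pstar $ ij > 0" for ij
    using sinkhorn_pos[OF lam a b P] by (simp add: vec_of_mat_def)
  then have y0: "y0 \<in> primal_pos" and K_eq: "K = Kmat lam (unpack1 y0)"
    unfolding primal_pos_def y0_def K_def by (simp_all add: pack_def unpack1_def vec_eq_iff)
  have "KKT_red lam (b $ None) x0 y0 = 0"
    unfolding x0_def y0_def KKT_red_pack[OF norm] KKT0 by (simp add: vec_eq_iff)
  then have "sign_flip *v x0 + KKT_red_state lam y0 = 0" by (simp only: KKT_red_eq)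
  from implicit_function_linear_plus[OF open_primal_pos y0 has_derivative_KKT_red_state
      continuous_on_Kmat Kmat_invertible_on_primal_pos[OF lam] this]
  obtain U V g g' where UV: "open U" "x0 \<in> U" "open V" "y0 \<in> V" "g x0 = y0" "\<forall>x\<in>U. g x \<in> V"
    and solve: "\<forall>x\<in>U. \<forall>y\<in>V. sign_flip *v x + KKT_red_state lam y = 0 \<longleftrightarrow> y = g x"
    and der: "\<forall>x\<in>U. (g has_derivative (\<lambda>h. g' x *v h)) (at x)" and cont: "continuous_on U g'"
    and g'x0: "g' x0 = - (matrix_inv K ** sign_flip)"
    unfolding K_eq by blast
  have "g' x0 ** sign_flip = - matrix_inv K"
    unfolding g'x0 by (simp add: matrix_mul_uminus_left matrix_mul_assoc[symmetric] sign_flip_mult_self)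
  moreover have "invertible K" unfolding K_def using lam p_pos by (rule Kmat_invertible)
  ultimately show ?thesis unfolding KKT_red_eq using UV solve der cont by blast
qed

end
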